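(* Let $\alpha=\sqrt{a_{ij}y^iy^j}$ be a Riemannian metric and $\beta=b_iy^i$ a $1$-form on a manifold, with $b=\|\beta\|_\alpha$, satisfying ${}^\alpha R^i{}_j=\mu(\alpha^2\delta^i{}_j-y^iy_j)$ and $b_{i|j}=c(x)a_{ij}$ with $c^2=\kappa-\mu b^2$, where $\mu<0$ and $\kappa=0$. Define $\bar\alpha:=\alpha/b$ and $\bar\beta:=\beta/b^2$. Then ${}^{\bar\alpha}R^i{}_j=0$ and $\bar b_{i|j}=0$. In this case $\bar b=1$.
   Context: ${}^\alpha R^i{}_j$ denotes the Riemann curvature tensor of $\alpha$, $y_j=a_{jk}y^k$, $b_{i|j}$ the covariant derivative of $\beta$ with respect to $\alpha$; ${}^{\bar\alpha}R^i{}_j$ is the Riemann curvature tensor of $\bar\alpha$, $\bar b_{i|j}$ the covariant derivative of $\bar\beta=\bar b_iy^i$ with respect to $\bar\alpha$, and $\bar b=\|\bar\beta\|_{\bar\alpha}$. *)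

theory Defs
  imports "HOL-Analysis.Analysis"
begin

text \<open>Local coordinate rendering of Riemannian data on a chart domain U \<subseteq> R^n.
  Points and tangent vectors are elements of real^'n, indices range over 'n.\<close>

definition pd :: "'n::finite \<Rightarrow> (real^'n \<Rightarrow> real) \<Rightarrow> real^'n \<Rightarrow> real" where
  "pd i f x = deriv (\<lambda>t. f (x + t *\<^sub>R axis i 1)) 0"

fun ipd :: "'n::finite list \<Rightarrow> (real^'n \<Rightarrow> real) \<Rightarrow> real^'n \<Rightarrow> real" where
  "ipd [] f = f"
| "ipd (i # is) f = pd i (ipd is f)"

definition smooth_on :: "(real^'n::finite) set \<Rightarrow> (real^'n \<Rightarrow> real) \<Rightarrow> bool" where
  "smooth_on U f \<longleftrightarrow> (\<forall>is. ipd is f differentiable_on U)"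

definition riem_metric :: "(real^'n::finite) set \<Rightarrow> ('n \<Rightarrow> 'n \<Rightarrow> real^'n \<Rightarrow> real) \<Rightarrow> bool" where
  "riem_metric U a \<longleftrightarrow> open U \<and> (\<forall>i j. smooth_on U (a i j)) \<and>
     (\<forall>x\<in>U. (\<forall>i j. a i j x = a j i x) \<and>
        (\<forall>v::real^'n. v \<noteq> 0 \<longrightarrow> (\<Sum>i\<in>UNIV. \<Sum>j\<in>UNIV. a i j x * v$i * v$j) > 0))"

definition inv_metric :: "('n::finite \<Rightarrow> 'n \<Rightarrow> real^'n \<Rightarrow> real) \<Rightarrow> 'n \<Rightarrow> 'n \<Rightarrow> real^'n \<Rightarrow> real" where
  "inv_metric a i j x = matrix_inv (\<chi> k l. a k l x) $ i $ j"

definition christoffel :: "('n::finite \<Rightarrow> 'n \<Rightarrow> real^'n \<Rightarrow> real) \<Rightarrow> 'n \<Rightarrow> 'n \<Rightarrow> 'n \<Rightarrow> real^'n \<Rightarrow> real" where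
  "christoffel a k i j x = (1/2) * (\<Sum>l\<in>UNIV. inv_metric a k l x *
      (pd i (a j l) x + pd j (a i l) x - pd l (a i j) x))"

text \<open>Riemann tensor R^i_{jkl} with R(d_k,d_l)d_j = R^i_{jkl} d_i\<close>
definition riem_tensor :: "('n::finite \<Rightarrow> 'n \<Rightarrow> real^'n \<Rightarrow> real) \<Rightarrow> 'n \<Rightarrow> 'n \<Rightarrow> 'n \<Rightarrow> 'n \<Rightarrow> real^'n \<Rightarrow> real" where
  "riem_tensor a i j k l x =
     pd k (christoffel a i l j) x - pd l (christoffel a i k j) x
     + (\<Sum>m\<in>UNIV. christoffel a i k m x * christoffel a m l j x
                 - christoffel a i l m x * christoffel a m k j x)"

text \<open>Riemann curvature (as used in Finsler geometry) R^i_k(x,y) = R^i_{jkl} y^j y^l\<close>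
definition riem_curv :: "('n::finite \<Rightarrow> 'n \<Rightarrow> real^'n \<Rightarrow> real) \<Rightarrow> 'n \<Rightarrow> 'n \<Rightarrow> real^'n \<Rightarrow> real^'n \<Rightarrow> real" where
  "riem_curv a i k x y = (\<Sum>j\<in>UNIV. \<Sum>l\<in>UNIV. riem_tensor a i j k l x * y$j * y$l)"

definition alpha_sq :: "('n::finite \<Rightarrow> 'n \<Rightarrow> real^'n \<Rightarrow> real) \<Rightarrow> real^'n \<Rightarrow> real^'n \<Rightarrow> real" where
  "alpha_sq a x y = (\<Sum>i\<in>UNIV. \<Sum>j\<in>UNIV. a i j x * y$i * y$j)"

definition lower :: "('n::finite \<Rightarrow> 'n \<Rightarrow> real^'n \<Rightarrow> real) \<Rightarrow> real^'n \<Rightarrow> real^'n \<Rightarrow> 'n \<Rightarrow> real" where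
  "lower a x y k = (\<Sum>j\<in>UNIV. a k j x * y$j)"

definition cov_deriv :: "('n::finite \<Rightarrow> 'n \<Rightarrow> real^'n \<Rightarrow> real) \<Rightarrow> ('n \<Rightarrow> real^'n \<Rightarrow> real) \<Rightarrow> 'n \<Rightarrow> 'n \<Rightarrow> real^'n \<Rightarrow> real" where
  "cov_deriv a b i j x = pd j (b i) x - (\<Sum>k\<in>UNIV. christoffel a k i j x * b k x)"

definition form_norm :: "('n::finite \<Rightarrow> 'n \<Rightarrow> real^'n \<Rightarrow> real) \<Rightarrow> ('n \<Rightarrow> real^'n \<Rightarrow> real) \<Rightarrow> real^'n \<Rightarrow> real" where
  "form_norm a b x = sqrt (\<Sum>i\<in>UNIV. \<Sum>j\<in>UNIV. inv_metric a i j x * b i x * b j x)"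

end

theory Submission
  imports Defs
begin

text \<open>The new metric is a conformal change a/b^2 = e^(2 sigma) a with sigma = - ln b. From
  b_i|j = c a_ij one gets d(b^2) = 2 c beta, and then c^2 = - mu b^2 gives dc = - mu beta. Hence
  s = d sigma = - (c/b^2) beta has covariant derivative s_l|k = mu (a_kl - b_k b_l / b^2) and
  squared length c^2/b^2 = - mu. Inserting this into the transformation law of the curvature
  tensor under a conformal change, the correction is exactly - mu (alpha^2 delta^i_k - y^i y_k),
  which cancels the curvature of alpha. The Christoffel symbols change by
  delta s + delta s - a s^#; as s is proportional to beta, this makes beta/b^2 parallel, and its
  norm for the new metric is b^2 b^2 / b^4 = 1.\<close>

section \<open>Partial derivatives\<close>

lemma pd_eq_has_derivative:
  fixes f :: "real^'n::finite \<Rightarrow> real"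
  assumes "(f has_derivative D) (at x)"
  shows "pd i f x = D (axis i 1)"
proof -
  let ?v = "axis i 1 :: real^'n"
  have line: "((\<lambda>t::real. x + t *\<^sub>R ?v) has_derivative (\<lambda>t. t *\<^sub>R ?v)) (at 0)"
    by (auto intro!: derivative_eq_intros)
  have "(f has_derivative D) (at (x + 0 *\<^sub>R ?v))" using assms by simp
  from has_derivative_compose[OF line this]
  have "((\<lambda>t. f (x + t *\<^sub>R ?v)) has_derivative (\<lambda>t. D (t *\<^sub>R ?v))) (at 0)"
    by (simp add: o_def)
  moreover have "(\<lambda>t. D (t *\<^sub>R ?v)) = (*) (D ?v)"
    using assms has_derivative_linear by (fastforce simp: linear_scale)
  ultimately have "((\<lambda>t. f (x + t *\<^sub>R ?v)) has_field_derivative D ?v) (at 0)"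
    by (simp add: has_field_derivative_def)
  thus ?thesis unfolding pd_def by (rule DERIV_imp_deriv)
qed

lemma pd_eq_frechet_derivative:
  fixes f :: "real^'n::finite \<Rightarrow> real"
  assumes "f differentiable (at x)"
  shows "pd i f x = frechet_derivative f (at x) (axis i 1)"
  using assms frechet_derivative_works pd_eq_has_derivative by blast

lemma pd_add:
  fixes f g :: "real^'n::finite \<Rightarrow> real"
  assumes "f differentiable (at x)" "g differentiable (at x)"
  shows "pd i (\<lambda>y. f y + g y) x = pd i f x + pd i g x"
  using assms pd_eq_has_derivative[OF has_derivative_add]
  by (simp add: pd_eq_frechet_derivative frechet_derivative_works)

lemma pd_diff:
  fixes f g :: "real^'n::finite \<Rightarrow> real"
  assumes "f differentiable (at x)" "g differentiable (at x)"
  shows "pd i (\<lambda>y. f y - g y) x = pd i f x - pd i g x"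
  using assms pd_eq_has_derivative[OF has_derivative_diff]
  by (simp add: pd_eq_frechet_derivative frechet_derivative_works)

lemma pd_mult:
  fixes f g :: "real^'n::finite \<Rightarrow> real"
  assumes "f differentiable (at x)" "g differentiable (at x)"
  shows "pd i (\<lambda>y. f y * g y) x = pd i f x * g x + f x * pd i g x"
proof -
  have "((\<lambda>y. f y * g y) has_derivative
      (\<lambda>h. f x * frechet_derivative g (at x) h + frechet_derivative f (at x) h * g x)) (at x)"
    using assms frechet_derivative_works by (blast intro: has_derivative_mult)
  from pd_eq_has_derivative[OF this] show ?thesis
    using assms by (simp add: pd_eq_frechet_derivative algebra_simps)
qed

lemma pd_const: "pd i (\<lambda>y::real^'n::finite. k) x = 0"
proof -
  have "((\<lambda>y::real^'n. k) has_derivative (\<lambda>h. 0)) (at x)" by simp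
  from pd_eq_has_derivative[OF this] show ?thesis by simp
qed

lemma pd_cmult:
  fixes f :: "real^'n::finite \<Rightarrow> real"
  assumes "f differentiable (at x)"
  shows "pd i (\<lambda>y. k * f y) x = k * pd i f x"
  using pd_mult[OF differentiable_const assms] by (simp add: pd_const)

lemma pd_minus:
  fixes f :: "real^'n::finite \<Rightarrow> real"
  assumes "f differentiable (at x)"
  shows "pd i (\<lambda>y. - f y) x = - pd i f x"
  using pd_cmult[OF assms, of i "-1"] by simp

lemma pd_sum:
  fixes f :: "'a \<Rightarrow> real^'n::finite \<Rightarrow> real"
  assumes "finite A" "\<And>a. a \<in> A \<Longrightarrow> f a differentiable (at x)"
  shows "pd i (\<lambda>y. \<Sum>a\<in>A. f a y) x = (\<Sum>a\<in>A. pd i (f a) x)"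
proof -
  have "((\<lambda>y. \<Sum>a\<in>A. f a y) has_derivative (\<lambda>h. \<Sum>a\<in>A. frechet_derivative (f a) (at x) h)) (at x)"
    by (rule has_derivative_sum) (use assms frechet_derivative_works in blast)
  from pd_eq_has_derivative[OF this] show ?thesis
    using assms(2) pd_eq_frechet_derivative by (metis (mono_tags, lifting) sum.cong)
qed

lemma pd_divide:
  fixes f g :: "real^'n::finite \<Rightarrow> real"
  assumes "f differentiable (at x)" "g differentiable (at x)" "g x \<noteq> 0"
  shows "pd i (\<lambda>y. f y / g y) x = pd i f x / g x - f x * pd i g x / (g x)\<^sup>2"
proof -
  have "((\<lambda>y. f y / g y) has_derivative
      (\<lambda>h. - f x * (inverse (g x) * frechet_derivative g (at x) h * inverse (g x))
        + frechet_derivative f (at x) h / g x)) (at x)"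
    using assms frechet_derivative_works by (blast intro: has_derivative_divide)
  from pd_eq_has_derivative[OF this] show ?thesis
    using assms by (simp add: pd_eq_frechet_derivative power2_eq_square divide_inverse)
qed

lemma pd_cong_open:
  fixes f g :: "real^'n::finite \<Rightarrow> real"
  assumes "open U" "x \<in> U" "\<And>y. y \<in> U \<Longrightarrow> f y = g y"
  shows "pd i f x = pd i g x"
proof -
  let ?line = "\<lambda>t::real. x + t *\<^sub>R axis i 1"
  have "open (?line -` U)"
    by (rule continuous_open_vimage[OF assms(1)]) (auto intro!: continuous_intros)
  moreover have "0 \<in> ?line -` U" using assms(2) by simp
  ultimately have "eventually (\<lambda>t. ?line t \<in> U) (nhds 0)"
    unfolding eventually_nhds by blast
  hence "eventually (\<lambda>t. f (?line t) = g (?line t)) (nhds 0)"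
    by (rule eventually_mono) (use assms(3) in auto)
  thus ?thesis unfolding pd_def by (rule deriv_cong_ev) simp
qed

lemma differentiable_at_cong_open:
  fixes f g :: "real^'n::finite \<Rightarrow> real"
  assumes "g differentiable (at x)" "open U" "x \<in> U" "\<And>y. y \<in> U \<Longrightarrow> g y = f y"
  shows "f differentiable (at x)"
  using assms unfolding differentiable_def by (meson has_derivative_transform_within_open)

lemma differentiable_prod:
  fixes f :: "'a \<Rightarrow> real^'n::finite \<Rightarrow> real"
  assumes "\<And>a. a \<in> A \<Longrightarrow> f a differentiable (at x)"
  shows "(\<lambda>y. \<Prod>a\<in>A. f a y) differentiable (at x)"
proof -
  have "((\<lambda>y. \<Prod>a\<in>A. f a y) has_derivative
      (\<lambda>h. \<Sum>a\<in>A. frechet_derivative (f a) (at x) h * (\<Prod>b\<in>A - {a}. f b x))) (at x)"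
    by (rule has_derivative_prod) (use assms frechet_derivative_works in blast)
  thus ?thesis unfolding differentiable_def by blast
qed

lemma differentiable_det:
  fixes M :: "real^'n::finite \<Rightarrow> real^'m::finite^'m"
  assumes "\<And>i j. (\<lambda>y. M y $ i $ j) differentiable (at x)"
  shows "(\<lambda>y. det (M y)) differentiable (at x)"
  unfolding det_def
  by (rule differentiable_sum)
    (simp_all add: finite_permutations differentiable_prod assms)

lemma smooth_on_differentiable:
  assumes "smooth_on U f" "open U" "x \<in> U"
  shows "f differentiable (at x)" "pd k f differentiable (at x)"
proof -
  have "ipd [] f differentiable_on U" "ipd [k] f differentiable_on U"
    using assms(1) unfolding smooth_on_def by blast+
  thus "f differentiable (at x)" "pd k f differentiable (at x)"
    using assms(2,3) differentiable_on_eq_differentiable_at by auto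
qed

lemma if_zero_mult [simp]: "(if P then u else 0) * v = (if P then u * v else (0::'a::mult_zero))"
  by simp

lemma mult_if_zero [simp]: "v * (if P then u else 0) = (if P then v * u else (0::'a::mult_zero))"
  by simp

lemma matrix_inv_mult:
  fixes A :: "'a::semiring_1^'n^'m"
  assumes "invertible A"
  shows "A ** matrix_inv A = mat 1" "matrix_inv A ** A = mat 1"
  using someI_ex[OF assms[unfolded invertible_def]] unfolding matrix_inv_def by auto

lemma matrix_inv_unique:
  fixes A B :: "'a::semiring_1^'n^'n"
  assumes "A ** B = mat 1" "B ** A = mat 1"
  shows "matrix_inv A = B"
proof -
  have "invertible A" using assms unfolding invertible_def by blast
  have "matrix_inv A = matrix_inv A ** (A ** B)" by (simp add: assms(1))
  also have "\<dots> = B" by (simp add: matrix_mul_assoc matrix_inv_mult(2)[OF \<open>invertible A\<close>])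
  finally show ?thesis .
qed

text \<open>The change of the Christoffel symbols under the conformal change e^(2 sigma) a with
  d sigma = v, where w is v with its index raised.\<close>

definition shift_tensor ::
    "('n::finite \<Rightarrow> real) \<Rightarrow> ('n \<Rightarrow> real) \<Rightarrow> ('n \<Rightarrow> 'n \<Rightarrow> real) \<Rightarrow> 'n \<Rightarrow> 'n \<Rightarrow> 'n \<Rightarrow> real" where
  "shift_tensor v w A i l j = (if i = j then v l else 0) + (if i = l then v j else 0) - A l j * w i"

lemma sum_shift_tensor_mult:
  fixes A :: "'n::finite \<Rightarrow> 'n \<Rightarrow> real" and v w :: "'n \<Rightarrow> real"
  assumes Aw: "\<And>k. (\<Sum>m\<in>UNIV. A k m * w m) = v k"
  shows "(\<Sum>m\<in>UNIV. shift_tensor v w A i k m * shift_tensor v w A m l j)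
    = (if i = j then v k * v l else 0) + (if i = l then v k * v j else 0)
      + (if i = k then 2 * (v j * v l) - A l j * (\<Sum>m\<in>UNIV. v m * w m) else 0)
      - A k j * v l * w i - A k l * v j * w i"
proof -
  have left: "(\<Sum>m\<in>UNIV. shift_tensor v w A i k m * X m)
      = v k * X i + (if i = k then (\<Sum>m\<in>UNIV. v m * X m) else 0) - w i * (\<Sum>m\<in>UNIV. A k m * X m)"
    for X
    by (cases "i = k")
      (simp_all add: shift_tensor_def algebra_simps sum.distrib sum_subtractf sum_distrib_left)
  have vS: "(\<Sum>m\<in>UNIV. v m * shift_tensor v w A m l j)
      = 2 * (v j * v l) - A l j * (\<Sum>m\<in>UNIV. v m * w m)"
    by (simp add: shift_tensor_def algebra_simps sum.distrib sum_subtractf sum_distrib_left)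
  have "(\<Sum>m\<in>UNIV. A k m * shift_tensor v w A m l j)
      = A k j * v l + A k l * v j - A l j * (\<Sum>m\<in>UNIV. A k m * w m)"
    by (simp add: shift_tensor_def algebra_simps sum.distrib sum_subtractf sum_distrib_left)
  hence AS: "(\<Sum>m\<in>UNIV. A k m * shift_tensor v w A m l j) = A k j * v l + A k l * v j - A l j * v k"
    by (simp only: Aw)
  show ?thesis
    unfolding left vS AS by (cases "i = k") (simp_all add: shift_tensor_def algebra_simps)
qed

text \<open>Curvature of the connection G + S when the partial derivatives dS of S are expressed through
  its covariant derivative N with respect to the torsion-free G; dG1 and dG2 stand for the
  derivative terms of the curvature of G.\<close>

lemma shifted_curvature_identity:
  fixes G S :: "'n::finite \<Rightarrow> 'n \<Rightarrow> 'n \<Rightarrow> real" and dS N :: "'n \<Rightarrow> 'n \<Rightarrow> 'n \<Rightarrow> 'n \<Rightarrow> real"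
  assumes sym: "\<And>m. G m l k = G m k l"
    and dS: "\<And>k l. dS k i l j = N k i l j - (\<Sum>m\<in>UNIV. G i k m * S m l j)
      + (\<Sum>m\<in>UNIV. G m k l * S i m j) + (\<Sum>m\<in>UNIV. G m k j * S i l m)"
  shows "(dG1 + dS k i l j) - (dG2 + dS l i k j)
      + (\<Sum>m\<in>UNIV. (G i k m + S i k m) * (G m l j + S m l j) - (G i l m + S i l m) * (G m k j + S m k j))
    = (dG1 - dG2 + (\<Sum>m\<in>UNIV. G i k m * G m l j - G i l m * G m k j))
      + (N k i l j - N l i k j) + (\<Sum>m\<in>UNIV. S i k m * S m l j - S i l m * S m k j)"
  unfolding dS sym by (simp add: sum.distrib sum_subtractf algebra_simps)

section \<open>Riemannian charts\<close>

locale riemannian_chart =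
  fixes U :: "(real^'n::finite) set"
    and a :: "'n \<Rightarrow> 'n \<Rightarrow> real^'n \<Rightarrow> real"
  assumes metric: "riem_metric U a"
begin

abbreviation \<Gamma> where "\<Gamma> \<equiv> christoffel a"
abbreviation ainv where "ainv \<equiv> inv_metric a"

lemma open_domain: "open U"
  using metric unfolding riem_metric_def by auto

lemma metric_sym: "x \<in> U \<Longrightarrow> a i j x = a j i x"
  using metric unfolding riem_metric_def by auto

lemma metric_pos_def:
  "x \<in> U \<Longrightarrow> v \<noteq> 0 \<Longrightarrow> (\<Sum>i\<in>UNIV. \<Sum>j\<in>UNIV. a i j x * v$i * v$j) > 0"
  using metric unfolding riem_metric_def by auto

lemma metric_diag_pos: "x \<in> U \<Longrightarrow> a i i x > 0"
  using metric_pos_def[of x "axis i 1"] by (simp add: axis_def vec_eq_iff cong: if_cong)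

lemma differentiable_metric: "x \<in> U \<Longrightarrow> a i j differentiable (at x)"
  using metric smooth_on_differentiable open_domain unfolding riem_metric_def by blast

lemma differentiable_pd_metric: "x \<in> U \<Longrightarrow> pd k (a i j) differentiable (at x)"
  using metric smooth_on_differentiable open_domain unfolding riem_metric_def by blast

lemma pd_metric_sym: "x \<in> U \<Longrightarrow> pd k (a i j) x = pd k (a j i) x"
  by (rule pd_cong_open[OF open_domain]) (auto simp: metric_sym)

definition metric_matrix :: "real^'n \<Rightarrow> real^'n^'n" where
  "metric_matrix x = (\<chi> k l. a k l x)"

lemma invertible_metric_matrix:
  assumes "x \<in> U"
  shows "invertible (metric_matrix x)"
proof -
  have "v = 0" if "metric_matrix x *v v = 0" for v
  proof (rule ccontr)
    assume "v \<noteq> 0"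
    moreover have "(\<Sum>i\<in>UNIV. \<Sum>j\<in>UNIV. a i j x * v$i * v$j) = v \<bullet> (metric_matrix x *v v)"
      by (simp add: metric_matrix_def matrix_vector_mult_def inner_vec_def sum_distrib_left mult_ac)
    ultimately show False using metric_pos_def[OF assms \<open>v \<noteq> 0\<close>] that by simp
  qed
  thus ?thesis unfolding invertible_left_inverse matrix_left_invertible_ker by blast
qed

lemma inv_metric_mult_metric:
  "x \<in> U \<Longrightarrow> (\<Sum>l\<in>UNIV. ainv k l x * a l m x) = (if k = m then 1 else 0)"
  using matrix_inv_mult(2)[OF invertible_metric_matrix, of x] unfolding vec_eq_iff
  by (simp add: matrix_matrix_mult_def mat_def inv_metric_def metric_matrix_def)

lemma metric_mult_inv_metric:
  "x \<in> U \<Longrightarrow> (\<Sum>l\<in>UNIV. a k l x * ainv l m x) = (if k = m then 1 else 0)"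
  using matrix_inv_mult(1)[OF invertible_metric_matrix, of x] unfolding vec_eq_iff
  by (simp add: matrix_matrix_mult_def mat_def inv_metric_def metric_matrix_def)

lemma inv_metric_cramer:
  assumes "x \<in> U"
  shows "ainv k l x =
    det (\<chi> i j. if j = k then axis l 1 $ i else metric_matrix x $ i $ j) / det (metric_matrix x)"
proof -
  let ?A = "metric_matrix x"
  have "det ?A \<noteq> 0" using invertible_metric_matrix[OF assms] invertible_det_nz by blast
  moreover have "?A *v (matrix_inv ?A *v axis l 1) = axis l 1"
    by (simp add: matrix_vector_mul_assoc matrix_inv_mult(1)[OF invertible_metric_matrix[OF assms]])
  ultimately have "matrix_inv ?A *v axis l 1
      = (\<chi> k. det (\<chi> i j. if j = k then axis l 1 $ i else ?A $ i $ j) / det ?A)"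
    using cramer by blast
  moreover have "(matrix_inv ?A *v axis l 1) $ k = matrix_inv ?A $ k $ l"
    by (simp add: matrix_vector_mult_def axis_def if_distrib cong: if_cong)
  ultimately show ?thesis by (simp add: inv_metric_def metric_matrix_def)
qed

lemma differentiable_inv_metric:
  assumes "x \<in> U"
  shows "ainv k l differentiable (at x)"
proof (rule differentiable_at_cong_open[OF _ open_domain assms])
  have "(\<lambda>y. (\<chi> i j. if j = k then axis l 1 $ i else metric_matrix y $ i $ j) $ i $ j)
      differentiable (at x)" for i j
    by (cases "j = k") (simp_all add: metric_matrix_def differentiable_metric[OF assms])
  moreover have "(\<lambda>y. metric_matrix y $ i $ j) differentiable (at x)" for i j
    by (simp add: metric_matrix_def differentiable_metric[OF assms])
  moreover have "det (metric_matrix x) \<noteq> 0"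
    using invertible_metric_matrix[OF assms] invertible_det_nz by blast
  ultimately show "(\<lambda>y. det (\<chi> i j. if j = k then axis l 1 $ i else metric_matrix y $ i $ j)
      / det (metric_matrix y)) differentiable (at x)"
    by (intro differentiable_divide differentiable_det)
qed (simp add: inv_metric_cramer)

lemma differentiable_christoffel:
  "x \<in> U \<Longrightarrow> \<Gamma> k i j differentiable (at x)"
  unfolding christoffel_def[abs_def]
  by (intro differentiable_mult differentiable_const differentiable_sum ballI differentiable_add
      differentiable_diff differentiable_inv_metric differentiable_pd_metric) auto

lemma christoffel_sym: "x \<in> U \<Longrightarrow> \<Gamma> k i j x = \<Gamma> k j i x"
  unfolding christoffel_def by (simp add: pd_metric_sym algebra_simps)

lemma christoffel_lowered:
  assumes "x \<in> U"
  shows "(\<Sum>m\<in>UNIV. \<Gamma> m k p x * a m q x)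
    = (1/2) * (pd k (a p q) x + pd p (a k q) x - pd q (a k p) x)"
proof -
  have "(\<Sum>m\<in>UNIV. \<Gamma> m k p x * a m q x) = (1/2) * (\<Sum>l\<in>UNIV. (\<Sum>m\<in>UNIV. a q m x * ainv m l x)
      * (pd k (a p l) x + pd p (a k l) x - pd l (a k p) x))"
    unfolding christoffel_def sum_distrib_right sum_distrib_left
    by (subst sum.swap) (simp add: metric_sym[OF assms, of q] mult_ac)
  thus ?thesis by (simp add: metric_mult_inv_metric[OF assms])
qed

lemma pd_metric:
  assumes "x \<in> U"
  shows "pd k (a p q) x = (\<Sum>m\<in>UNIV. \<Gamma> m k p x * a m q x + \<Gamma> m k q x * a p m x)"
proof -
  have "(\<Sum>m\<in>UNIV. \<Gamma> m k q x * a p m x) = (\<Sum>m\<in>UNIV. \<Gamma> m k q x * a m p x)"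
    by (rule sum.cong[OF refl]) (simp add: metric_sym[OF assms, of p])
  thus ?thesis
    using christoffel_lowered[OF assms, of k q p] christoffel_lowered[OF assms, of k p q]
      pd_metric_sym[OF assms, of k q p]
    by (simp add: sum.distrib field_simps)
qed

lemma inv_metric_metric_contract:
  assumes "x \<in> U"
  shows "(\<Sum>m\<in>UNIV. ainv i m x * (\<Sum>l\<in>UNIV. a m l x * F l)) = F i"
proof -
  have "(\<Sum>m\<in>UNIV. ainv i m x * (\<Sum>l\<in>UNIV. a m l x * F l))
      = (\<Sum>m\<in>UNIV. \<Sum>l\<in>UNIV. ainv i m x * a m l x * F l)"
    by (simp add: sum_distrib_left mult.assoc)
  also have "\<dots> = (\<Sum>l\<in>UNIV. (\<Sum>m\<in>UNIV. ainv i m x * a m l x) * F l)"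
    by (subst sum.swap) (simp add: sum_distrib_right)
  finally show ?thesis by (simp add: inv_metric_mult_metric[OF assms])
qed

lemma pd_inv_metric_conj:
  assumes "x \<in> U"
  shows "pd k (ainv i j) x = - (\<Sum>m\<in>UNIV. \<Sum>l\<in>UNIV. ainv i m x * pd k (a m l) x * ainv l j x)"
proof -
  have "(\<Sum>l\<in>UNIV. pd k (a m l) x * ainv l j x + a m l x * pd k (ainv l j) x) = 0" for m
  proof -
    have "(\<Sum>l\<in>UNIV. pd k (a m l) x * ainv l j x + a m l x * pd k (ainv l j) x)
        = pd k (\<lambda>y. \<Sum>l\<in>UNIV. a m l y * ainv l j y) x"
      by (simp add: pd_sum pd_mult differentiable_mult differentiable_metric[OF assms]
          differentiable_inv_metric[OF assms])
    also have "\<dots> = pd k (\<lambda>y. if m = j then 1 else 0) x"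
      by (rule pd_cong_open[OF open_domain assms]) (simp add: metric_mult_inv_metric)
    finally show ?thesis by (simp add: pd_const)
  qed
  hence "(\<Sum>l\<in>UNIV. a m l x * pd k (ainv l j) x) = (\<Sum>l\<in>UNIV. - pd k (a m l) x * ainv l j x)" for m
    by (simp add: sum.distrib sum_negf eq_neg_iff_add_eq_0 add.commute)
  hence "pd k (ainv i j) x = (\<Sum>m\<in>UNIV. ainv i m x * (\<Sum>l\<in>UNIV. - pd k (a m l) x * ainv l j x))"
    using inv_metric_metric_contract[OF assms, of i "\<lambda>l. pd k (ainv l j) x"] by simp
  thus ?thesis by (simp add: sum_distrib_left sum_negf mult.assoc)
qed

lemma pd_inv_metric:
  assumes "x \<in> U"
  shows "pd k (ainv i j) x = - (\<Sum>p\<in>UNIV. ainv i p x * \<Gamma> j k p x + \<Gamma> i k p x * ainv p j x)"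
proof -
  have first: "(\<Sum>m\<in>UNIV. \<Sum>l\<in>UNIV. \<Sum>p\<in>UNIV. ainv i m x * \<Gamma> p k m x * a p l x * ainv l j x)
      = (\<Sum>m\<in>UNIV. ainv i m x * \<Gamma> j k m x)"
  proof -
    have "(\<Sum>m\<in>UNIV. \<Sum>l\<in>UNIV. \<Sum>p\<in>UNIV. ainv i m x * \<Gamma> p k m x * a p l x * ainv l j x)
      = (\<Sum>m\<in>UNIV. \<Sum>p\<in>UNIV. ainv i m x * \<Gamma> p k m x * (\<Sum>l\<in>UNIV. a p l x * ainv l j x))"
      by (rule sum.cong[OF refl], subst sum.swap) (simp add: sum_distrib_left mult.assoc)
    thus ?thesis by (simp add: metric_mult_inv_metric[OF assms])
  qed
  have second: "(\<Sum>m\<in>UNIV. \<Sum>l\<in>UNIV. \<Sum>p\<in>UNIV. ainv i m x * \<Gamma> p k l x * a m p x * ainv l j x)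
      = (\<Sum>l\<in>UNIV. \<Gamma> i k l x * ainv l j x)"
  proof -
    have "(\<Sum>m\<in>UNIV. \<Sum>l\<in>UNIV. \<Sum>p\<in>UNIV. ainv i m x * \<Gamma> p k l x * a m p x * ainv l j x)
      = (\<Sum>l\<in>UNIV. \<Sum>m\<in>UNIV. \<Sum>p\<in>UNIV. ainv i m x * \<Gamma> p k l x * a m p x * ainv l j x)"
      by (rule sum.swap)
    also have "\<dots> = (\<Sum>l\<in>UNIV. \<Sum>p\<in>UNIV. (\<Sum>m\<in>UNIV. ainv i m x * a m p x) * (\<Gamma> p k l x * ainv l j x))"
      by (rule sum.cong[OF refl], subst sum.swap) (simp add: sum_distrib_left sum_distrib_right mult_ac)
    finally have "(\<Sum>m\<in>UNIV. \<Sum>l\<in>UNIV. \<Sum>p\<in>UNIV. ainv i m x * \<Gamma> p k l x * a m p x * ainv l j x)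
      = \<dots>" .
    thus ?thesis by (simp add: inv_metric_mult_metric[OF assms])
  qed
  have "pd k (ainv i j) x = - (\<Sum>m\<in>UNIV. \<Sum>l\<in>UNIV. \<Sum>p\<in>UNIV.
      ainv i m x * \<Gamma> p k m x * a p l x * ainv l j x + ainv i m x * \<Gamma> p k l x * a m p x * ainv l j x)"
    by (simp add: pd_inv_metric_conj[OF assms] pd_metric[OF assms] sum_distrib_left
        sum_distrib_right algebra_simps)
  thus ?thesis by (simp only: sum.distrib first second)
qed

definition raise :: "real^'n \<Rightarrow> ('n \<Rightarrow> real) \<Rightarrow> 'n \<Rightarrow> real" where
  "raise x v i = (\<Sum>p\<in>UNIV. ainv i p x * v p)"

lemma raise_scale: "raise x (\<lambda>p. r * v p) i = r * raise x v i"
  by (simp add: raise_def sum_distrib_left mult_ac)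

lemma metric_raise:
  assumes "x \<in> U"
  shows "(\<Sum>m\<in>UNIV. a k m x * raise x v m) = v k"
proof -
  have "(\<Sum>m\<in>UNIV. a k m x * raise x v m) = (\<Sum>m\<in>UNIV. \<Sum>p\<in>UNIV. a k m x * ainv m p x * v p)"
    by (simp add: raise_def sum_distrib_left mult.assoc)
  also have "\<dots> = (\<Sum>p\<in>UNIV. (\<Sum>m\<in>UNIV. a k m x * ainv m p x) * v p)"
    by (subst sum.swap) (simp add: sum_distrib_right)
  finally show ?thesis by (simp add: metric_mult_inv_metric[OF assms])
qed


lemma differentiable_raise:
  assumes "x \<in> U" "\<And>p. s p differentiable (at x)"
  shows "(\<lambda>y. raise y (\<lambda>p. s p y) i) differentiable (at x)"
  unfolding raise_def
  by (intro differentiable_sum differentiable_mult ballI differentiable_inv_metric assms) auto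

lemma pd_raise:
  assumes "x \<in> U" "\<And>p. s p differentiable (at x)"
    and ds: "\<And>p. pd k (s p) x = T p + (\<Sum>m\<in>UNIV. \<Gamma> m k p x * s m x)"
  shows "pd k (\<lambda>y. raise y (\<lambda>p. s p y) i) x
    = raise x T i - (\<Sum>q\<in>UNIV. \<Gamma> i k q x * raise x (\<lambda>p. s p x) q)"
proof -
  have "pd k (\<lambda>y. raise y (\<lambda>p. s p y) i) x
      = (\<Sum>p\<in>UNIV. pd k (ainv i p) x * s p x + ainv i p x * pd k (s p) x)"
    unfolding raise_def
    by (simp add: pd_sum pd_mult differentiable_mult differentiable_inv_metric[OF assms(1)] assms(2))
  also have "\<dots> = raise x T i - (\<Sum>p\<in>UNIV. \<Sum>q\<in>UNIV. \<Gamma> i k q x * ainv q p x * s p x)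
      + ((\<Sum>p\<in>UNIV. \<Sum>m\<in>UNIV. ainv i p x * \<Gamma> m k p x * s m x)
         - (\<Sum>p\<in>UNIV. \<Sum>q\<in>UNIV. ainv i q x * \<Gamma> p k q x * s p x))"
    by (simp add: pd_inv_metric[OF assms(1)] ds raise_def sum.distrib sum_subtractf
        sum_distrib_left sum_distrib_right algebra_simps)
  also have "(\<Sum>p\<in>UNIV. \<Sum>m\<in>UNIV. ainv i p x * \<Gamma> m k p x * s m x)
      = (\<Sum>p\<in>UNIV. \<Sum>q\<in>UNIV. ainv i q x * \<Gamma> p k q x * s p x)"
    by (rule sum.swap)
  also have "(\<Sum>p\<in>UNIV. \<Sum>q\<in>UNIV. \<Gamma> i k q x * ainv q p x * s p x)
      = (\<Sum>q\<in>UNIV. \<Gamma> i k q x * raise x (\<lambda>p. s p x) q)"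
    by (subst sum.swap) (simp add: raise_def sum_distrib_left mult_ac)
  finally show ?thesis by simp
qed

text \<open>The Christoffel terms of the two factors cancel: the derivative of a full contraction is
  the contraction with the covariant derivative.\<close>

lemma pd_inner_raise:
  assumes x: "x \<in> U" and s_diff: "\<And>p. s p differentiable (at x)"
    and ds: "\<And>p. pd k (s p) x = T p + (\<Sum>m\<in>UNIV. \<Gamma> m k p x * s m x)"
  shows "pd k (\<lambda>y. \<Sum>i\<in>UNIV. s i y * raise y (\<lambda>p. s p y) i) x
    = (\<Sum>i\<in>UNIV. T i * raise x (\<lambda>p. s p x) i + s i x * raise x T i)"
proof -
  let ?w = "raise x (\<lambda>p. s p x)"
  have "pd k (\<lambda>y. \<Sum>i\<in>UNIV. s i y * raise y (\<lambda>p. s p y) i) x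
      = (\<Sum>i\<in>UNIV. pd k (s i) x * ?w i + s i x * pd k (\<lambda>y. raise y (\<lambda>p. s p y) i) x)"
    by (simp add: pd_sum pd_mult differentiable_mult s_diff differentiable_raise[OF x s_diff])
  also have "\<dots> = (\<Sum>i\<in>UNIV. T i * ?w i + s i x * raise x T i)
      + ((\<Sum>i\<in>UNIV. \<Sum>m\<in>UNIV. \<Gamma> m k i x * s m x * ?w i)
        - (\<Sum>i\<in>UNIV. \<Sum>q\<in>UNIV. s i x * \<Gamma> i k q x * ?w q))"
    by (simp add: ds pd_raise[OF x s_diff ds] sum.distrib sum_subtractf sum_distrib_left
        sum_distrib_right algebra_simps)
  also have "(\<Sum>i\<in>UNIV. \<Sum>m\<in>UNIV. \<Gamma> m k i x * s m x * ?w i)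
      = (\<Sum>i\<in>UNIV. \<Sum>q\<in>UNIV. s i x * \<Gamma> i k q x * ?w q)"
    by (subst sum.swap) (simp add: mult_ac)
  finally show ?thesis by simp
qed

abbreviation conformal_shift :: "real^'n \<Rightarrow> ('n \<Rightarrow> real) \<Rightarrow> 'n \<Rightarrow> 'n \<Rightarrow> 'n \<Rightarrow> real" where
  "conformal_shift x v \<equiv> shift_tensor v (raise x v) (\<lambda>p q. a p q x)"

lemma differentiable_conformal_shift:
  assumes "x \<in> U" "\<And>p. s p differentiable (at x)"
  shows "(\<lambda>y. conformal_shift y (\<lambda>p. s p y) i l j) differentiable (at x)"
  using differentiable_raise[OF assms] differentiable_metric[OF assms(1)] assms(2)
  by (cases "i = j"; cases "i = l") (simp_all add: shift_tensor_def)

lemma pd_conformal_shift: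
  assumes x: "x \<in> U" and s_diff: "\<And>p. s p differentiable (at x)"
    and ds: "\<And>p. pd k (s p) x = T p + (\<Sum>m\<in>UNIV. \<Gamma> m k p x * s m x)"
  defines "S \<equiv> conformal_shift x (\<lambda>p. s p x)"
  shows "pd k (\<lambda>y. conformal_shift y (\<lambda>p. s p y) i l j) x
    = conformal_shift x T i l j - (\<Sum>m\<in>UNIV. \<Gamma> i k m x * S m l j)
      + (\<Sum>m\<in>UNIV. \<Gamma> m k l x * S i m j) + (\<Sum>m\<in>UNIV. \<Gamma> m k j x * S i l m)"
proof -
  let ?w = "raise x (\<lambda>p. s p x)"
  have "pd k (\<lambda>y. conformal_shift y (\<lambda>p. s p y) i l j) x
      = (if i = j then pd k (s l) x else 0) + (if i = l then pd k (s j) x else 0)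
        - (pd k (a l j) x * ?w i + a l j x * pd k (\<lambda>y. raise y (\<lambda>p. s p y) i) x)"
    using differentiable_raise[OF x s_diff] differentiable_metric[OF x] s_diff
    by (cases "i = j"; cases "i = l")
      (simp_all add: shift_tensor_def pd_add pd_diff pd_mult pd_minus pd_cmult pd_const)
  also have "\<dots> = (if i = j then T l + (\<Sum>m\<in>UNIV. \<Gamma> m k l x * s m x) else 0)
      + (if i = l then T j + (\<Sum>m\<in>UNIV. \<Gamma> m k j x * s m x) else 0)
      - ((\<Sum>m\<in>UNIV. \<Gamma> m k l x * a m j x + \<Gamma> m k j x * a l m x) * ?w i
         + a l j x * (raise x T i - (\<Sum>q\<in>UNIV. \<Gamma> i k q x * ?w q)))"
    by (simp only: ds pd_metric[OF x] pd_raise[OF x s_diff ds])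
  also have "\<dots> = conformal_shift x T i l j - (\<Sum>m\<in>UNIV. \<Gamma> i k m x * S m l j)
      + (\<Sum>m\<in>UNIV. \<Gamma> m k l x * S i m j) + (\<Sum>m\<in>UNIV. \<Gamma> m k j x * S i l m)"
  proof -
    have "(\<Sum>m\<in>UNIV. \<Gamma> i k m x * S m l j)
        = \<Gamma> i k j x * s l x + \<Gamma> i k l x * s j x - a l j x * (\<Sum>m\<in>UNIV. \<Gamma> i k m x * ?w m)"
      and "(\<Sum>m\<in>UNIV. \<Gamma> m k l x * S i m j) = (if i = j then (\<Sum>m\<in>UNIV. \<Gamma> m k l x * s m x) else 0)
        + \<Gamma> i k l x * s j x - ?w i * (\<Sum>m\<in>UNIV. \<Gamma> m k l x * a m j x)"
      and "(\<Sum>m\<in>UNIV. \<Gamma> m k j x * S i l m) = \<Gamma> i k j x * s l x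
        + (if i = l then (\<Sum>m\<in>UNIV. \<Gamma> m k j x * s m x) else 0)
        - ?w i * (\<Sum>m\<in>UNIV. \<Gamma> m k j x * a l m x)"
      unfolding S_def
      by (simp_all add: shift_tensor_def algebra_simps sum.distrib sum_subtractf sum_distrib_left)
    thus ?thesis
      by (cases "i = j"; cases "i = l") (simp_all add: shift_tensor_def sum.distrib algebra_simps)
  qed
  finally show ?thesis .
qed

end

section \<open>Conformal change of a metric\<close>

lemma riem_curv_change:
  assumes "\<And>j l. riem_tensor a' i j k l x = riem_tensor a i j k l x
      + \<mu> * ((if i = l then a k j x else 0) - (if i = k then a l j x else 0))"
  shows "riem_curv a' i k x y = riem_curv a i k x y
      - \<mu> * (alpha_sq a x y * (if i = k then 1 else 0) - y$i * lower a x y k)"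
proof -
  have "riem_tensor a' i j k l x * y$j * y$l = riem_tensor a i j k l x * y$j * y$l
      + \<mu> * ((if i = l then a k j x else 0) * y$j * y$l)
      - \<mu> * ((if i = k then a l j x else 0) * y$j * y$l)" for j l
    by (simp only: assms) (simp add: algebra_simps)
  hence "riem_curv a' i k x y = riem_curv a i k x y
      + \<mu> * (\<Sum>j\<in>UNIV. \<Sum>l\<in>UNIV. (if i = l then a k j x else 0) * y$j * y$l)
      - \<mu> * (\<Sum>j\<in>UNIV. \<Sum>l\<in>UNIV. (if i = k then a l j x else 0) * y$j * y$l)"
    unfolding riem_curv_def by (simp only: sum.distrib sum_subtractf sum_distrib_left)
  also have "(\<Sum>j\<in>UNIV. \<Sum>l\<in>UNIV. (if i = l then a k j x else 0) * y$j * y$l) = y$i * lower a x y k"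
    by (simp add: lower_def sum_distrib_left mult_ac)
  also have "(\<Sum>j\<in>UNIV. \<Sum>l\<in>UNIV. (if i = k then a l j x else 0) * y$j * y$l)
      = alpha_sq a x y * (if i = k then 1 else 0)"
    unfolding alpha_sq_def by (subst sum.swap) (simp add: mult_ac)
  finally show ?thesis by (simp add: algebra_simps)
qed

text \<open>The metric a / phi with phi = e^(-2 sigma) and s = d sigma.\<close>

locale conformal_change = riemannian_chart U a
  for U :: "(real^'n::finite) set" and a +
  fixes \<phi> :: "real^'n \<Rightarrow> real"
    and s :: "'n \<Rightarrow> real^'n \<Rightarrow> real"
  assumes factor_nonzero: "y \<in> U \<Longrightarrow> \<phi> y \<noteq> 0"
    and differentiable_factor: "y \<in> U \<Longrightarrow> \<phi> differentiable (at y)"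
    and pd_factor: "y \<in> U \<Longrightarrow> pd l \<phi> y = - 2 * \<phi> y * s l y"
begin

abbreviation abar :: "'n \<Rightarrow> 'n \<Rightarrow> real^'n \<Rightarrow> real" where
  "abar \<equiv> \<lambda>i j y. a i j y / \<phi> y"

lemma inv_metric_conformal:
  assumes "x \<in> U"
  shows "inv_metric abar k l x = \<phi> x * ainv k l x"
proof -
  let ?A = "(\<chi> k l. abar k l x) :: real^'n^'n"
  let ?B = "(\<chi> k l. \<phi> x * ainv k l x) :: real^'n^'n"
  have "(?A ** ?B) $ k $ m = (\<Sum>l\<in>UNIV. a k l x * ainv l m x)"
    and "(?B ** ?A) $ k $ m = (\<Sum>l\<in>UNIV. ainv k l x * a l m x)" for k m
    using factor_nonzero[OF assms] by (simp_all add: matrix_matrix_mult_def)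
  hence "?A ** ?B = mat 1" "?B ** ?A = mat 1"
    by (simp_all add: vec_eq_iff mat_def metric_mult_inv_metric[OF assms]
        inv_metric_mult_metric[OF assms])
  hence "matrix_inv ?A = ?B" by (rule matrix_inv_unique)
  thus ?thesis unfolding inv_metric_def by simp
qed

lemma pd_divide_factor:
  assumes "x \<in> U" "f differentiable (at x)"
  shows "pd l (\<lambda>y. f y / \<phi> y) x = (pd l f x + 2 * f x * s l x) / \<phi> x"
  using pd_divide[OF assms(2) differentiable_factor[OF assms(1)] factor_nonzero[OF assms(1)]]
    factor_nonzero[OF assms(1)]
  by (simp add: pd_factor[OF assms(1)] power2_eq_square field_simps)

lemma christoffel_conformal:
  assumes x: "x \<in> U"
  shows "christoffel abar k i j x = \<Gamma> k i j x + conformal_shift x (\<lambda>m. s m x) k i j"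
proof -
  have summand: "\<phi> x * ainv k l x * ((pd i (a j l) x + 2 * a j l x * s i x) / \<phi> x
        + (pd j (a i l) x + 2 * a i l x * s j x) / \<phi> x - (pd l (a i j) x + 2 * a i j x * s l x) / \<phi> x)
      = ainv k l x * (pd i (a j l) x + pd j (a i l) x - pd l (a i j) x)
        + 2 * (ainv k l x * a l j x * s i x + ainv k l x * a l i x * s j x
          - a i j x * (ainv k l x * s l x))" for l
    using factor_nonzero[OF x] metric_sym[OF x, of j l] metric_sym[OF x, of i l]
    by (simp add: field_simps)
  have "christoffel abar k i j x
      = (1/2) * (\<Sum>l\<in>UNIV. ainv k l x * (pd i (a j l) x + pd j (a i l) x - pd l (a i j) x))
        + (\<Sum>l\<in>UNIV. ainv k l x * a l j x * s i x + ainv k l x * a l i x * s j x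
          - a i j x * (ainv k l x * s l x))"
    unfolding christoffel_def inv_metric_conformal[OF x] pd_divide_factor[OF x differentiable_metric[OF x]]
    by (simp only: summand sum.distrib sum_distrib_left[symmetric] distrib_left)
  also have "\<dots> = \<Gamma> k i j x + ((\<Sum>l\<in>UNIV. ainv k l x * a l j x) * s i x
      + (\<Sum>l\<in>UNIV. ainv k l x * a l i x) * s j x - a i j x * raise x (\<lambda>m. s m x) k)"
    by (simp add: christoffel_def raise_def sum.distrib sum_subtractf sum_distrib_left
        sum_distrib_right)
  finally show ?thesis
    by (simp add: shift_tensor_def inv_metric_mult_metric[OF x])
qed

lemma riem_tensor_conformal:
  assumes x: "x \<in> U" and s_diff: "\<And>p. s p differentiable (at x)"
    and ds: "\<And>k p. pd k (s p) x = T k p + (\<Sum>m\<in>UNIV. \<Gamma> m k p x * s m x)"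
  defines "S \<equiv> conformal_shift x (\<lambda>p. s p x)"
  shows "riem_tensor abar i j k l x = riem_tensor a i j k l x
    + (conformal_shift x (T k) i l j - conformal_shift x (T l) i k j)
    + (\<Sum>m\<in>UNIV. S i k m * S m l j - S i l m * S m k j)"
proof -
  let ?dS = "\<lambda>k i l j. pd k (\<lambda>y. conformal_shift y (\<lambda>p. s p y) i l j) x"
  have dG: "pd k (christoffel abar i l j) x = pd k (\<Gamma> i l j) x + ?dS k i l j" for k i l j
  proof -
    have "pd k (christoffel abar i l j) x
        = pd k (\<lambda>y. \<Gamma> i l j y + conformal_shift y (\<lambda>p. s p y) i l j) x"
      by (rule pd_cong_open[OF open_domain x]) (simp add: christoffel_conformal)
    thus ?thesis
      by (simp add: pd_add[OF differentiable_christoffel[OF x] differentiable_conformal_shift[OF x s_diff]])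
  qed
  have "riem_tensor abar i j k l x = (pd k (\<Gamma> i l j) x + ?dS k i l j) - (pd l (\<Gamma> i k j) x + ?dS l i k j)
      + (\<Sum>m\<in>UNIV. (\<Gamma> i k m x + S i k m) * (\<Gamma> m l j x + S m l j)
        - (\<Gamma> i l m x + S i l m) * (\<Gamma> m k j x + S m k j))"
    by (simp add: riem_tensor_def dG christoffel_conformal[OF x] S_def)
  also have "\<dots> = riem_tensor a i j k l x
      + (conformal_shift x (T k) i l j - conformal_shift x (T l) i k j)
      + (\<Sum>m\<in>UNIV. S i k m * S m l j - S i l m * S m k j)"
    unfolding riem_tensor_def
    by (rule shifted_curvature_identity[where G = "\<lambda>k i j. \<Gamma> k i j x"])
      (auto simp: christoffel_sym[OF x] pd_conformal_shift[OF x s_diff ds] S_def)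
  finally show ?thesis .
qed

end

section \<open>Concircular forms\<close>

locale concircular_form = riemannian_chart U a
  for U :: "(real^'n::finite) set" and a +
  fixes b :: "'n \<Rightarrow> real^'n \<Rightarrow> real"
    and c :: "real^'n \<Rightarrow> real"
    and \<mu> :: real
  assumes smooth_form: "\<And>i. smooth_on U (b i)"
    and form_norm_pos: "\<And>x. x \<in> U \<Longrightarrow> form_norm a b x > 0"
    and cov_deriv_form: "\<And>x i j. x \<in> U \<Longrightarrow> cov_deriv a b i j x = c x * a i j x"
    and c_sq: "\<And>x. x \<in> U \<Longrightarrow> (c x)\<^sup>2 = - \<mu> * (form_norm a b x)\<^sup>2"
    and curvature_neg: "\<mu> < 0"
begin

lemma differentiable_form: "x \<in> U \<Longrightarrow> b i differentiable (at x)"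
  using smooth_form smooth_on_differentiable open_domain by blast

lemma differentiable_pd_form: "x \<in> U \<Longrightarrow> pd k (b i) differentiable (at x)"
  using smooth_form smooth_on_differentiable open_domain by blast

definition norm_sq :: "real^'n \<Rightarrow> real" where
  "norm_sq x = (\<Sum>i\<in>UNIV. b i x * raise x (\<lambda>p. b p x) i)"

lemma norm_sq_eq: "norm_sq x = (\<Sum>i\<in>UNIV. \<Sum>j\<in>UNIV. ainv i j x * b i x * b j x)"
  unfolding norm_sq_def raise_def by (simp add: sum_distrib_left mult_ac)

lemma form_norm_eq: "form_norm a b x = sqrt (norm_sq x)"
  unfolding form_norm_def norm_sq_eq ..

lemma norm_sq_pos: "x \<in> U \<Longrightarrow> norm_sq x > 0"
  using form_norm_pos form_norm_eq by (metis real_sqrt_gt_0_iff)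

lemma form_norm_sq: "x \<in> U \<Longrightarrow> (form_norm a b x)\<^sup>2 = norm_sq x"
  using norm_sq_pos by (simp add: form_norm_eq less_imp_le)

lemma c_sq_norm_sq: "x \<in> U \<Longrightarrow> (c x)\<^sup>2 = - \<mu> * norm_sq x"
  using c_sq form_norm_sq by simp

lemma c_nonzero:
  assumes "x \<in> U"
  shows "c x \<noteq> 0"
proof
  assume "c x = 0"
  hence "\<mu> * norm_sq x = 0" using c_sq_norm_sq[OF assms] by simp
  thus False using curvature_neg norm_sq_pos[OF assms] by simp
qed

lemma pd_form: "x \<in> U \<Longrightarrow> pd k (b i) x = c x * a i k x + (\<Sum>m\<in>UNIV. \<Gamma> m k i x * b m x)"
  using cov_deriv_form[of x i k] christoffel_sym[of x _ i k] by (simp add: cov_deriv_def)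

lemma differentiable_norm_sq: "x \<in> U \<Longrightarrow> norm_sq differentiable (at x)"
  unfolding norm_sq_def[abs_def]
  by (intro differentiable_sum differentiable_mult ballI differentiable_form
      differentiable_raise) auto

lemma pd_norm_sq: "x \<in> U \<Longrightarrow> pd k norm_sq x = 2 * c x * b k x"
proof -
  assume x: "x \<in> U"
  have "pd k norm_sq x = (\<Sum>i\<in>UNIV. c x * a i k x * raise x (\<lambda>p. b p x) i
      + b i x * raise x (\<lambda>p. c x * a p k x) i)"
    unfolding norm_sq_def[abs_def]
    by (rule pd_inner_raise[OF x differentiable_form[OF x]]) (simp add: pd_form[OF x])
  also have "\<dots> = c x * (\<Sum>i\<in>UNIV. a k i x * raise x (\<lambda>p. b p x) i)
      + c x * (\<Sum>i\<in>UNIV. b i x * (\<Sum>p\<in>UNIV. ainv i p x * a p k x))"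
    by (simp add: raise_def metric_sym[OF x, of _ k] sum.distrib sum_distrib_left mult_ac)
  also have "\<dots> = 2 * c x * b k x"
    by (simp add: metric_raise[OF x] inv_metric_mult_metric[OF x])
  finally show ?thesis .
qed

lemma differentiable_c: "x \<in> U \<Longrightarrow> c differentiable (at x)"
proof -
  assume x: "x \<in> U"
  obtain i :: 'n where True by blast
  have "(\<lambda>y. cov_deriv a b i i y / a i i y) differentiable (at x)"
    unfolding cov_deriv_def[abs_def] using metric_diag_pos[OF x, of i]
    by (intro differentiable_divide differentiable_diff differentiable_sum differentiable_mult ballI
        differentiable_pd_form differentiable_christoffel differentiable_form differentiable_metric x) auto
  moreover have "cov_deriv a b i i y / a i i y = c y" if "y \<in> U" for y
    using cov_deriv_form[OF that] metric_diag_pos[OF that, of i] by simp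
  ultimately show ?thesis by (rule differentiable_at_cong_open[OF _ open_domain x])
qed

lemma pd_c: "x \<in> U \<Longrightarrow> pd k c x = - \<mu> * b k x"
proof -
  assume x: "x \<in> U"
  have "pd k (\<lambda>y. c y * c y) x = pd k (\<lambda>y. - \<mu> * norm_sq y) x"
    by (rule pd_cong_open[OF open_domain x]) (simp add: c_sq_norm_sq power2_eq_square[symmetric])
  hence "c x * pd k c x + c x * pd k c x = - \<mu> * (2 * c x * b k x)"
    using pd_mult[OF differentiable_c[OF x] differentiable_c[OF x], of k]
      pd_cmult[OF differentiable_norm_sq[OF x], of k "- \<mu>"] pd_norm_sq[OF x, of k]
    by simp
  hence "c x * pd k c x = c x * (- \<mu> * b k x)" by (simp add: algebra_simps)
  thus ?thesis using c_nonzero[OF x] mult_left_cancel by blast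
qed

text \<open>d sigma for sigma = - ln b, using d(b^2) = 2 c beta.\<close>

definition sigma_grad :: "'n \<Rightarrow> real^'n \<Rightarrow> real" where
  "sigma_grad l y = - c y * b l y / norm_sq y"

lemma sigma_grad_eq: "sigma_grad p x = - (c x / norm_sq x) * b p x"
  by (simp add: sigma_grad_def)

lemma raise_sigma_grad:
  "raise x (\<lambda>p. sigma_grad p x) i = - (c x / norm_sq x) * raise x (\<lambda>p. b p x) i"
  unfolding sigma_grad_eq by (rule raise_scale)

lemma differentiable_sigma_grad:
  assumes x: "x \<in> U"
  shows "sigma_grad l differentiable (at x)"
  unfolding sigma_grad_def[abs_def] using norm_sq_pos[OF x]
  by (intro differentiable_divide differentiable_mult differentiable_minus differentiable_c[OF x]
      differentiable_form[OF x] differentiable_norm_sq[OF x]) auto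

lemma pd_sigma_grad:
  assumes x: "x \<in> U"
  shows "pd k (sigma_grad l) x = \<mu> * a k l x - \<mu> * b k x * b l x / norm_sq x
    + (\<Sum>m\<in>UNIV. \<Gamma> m k l x * sigma_grad m x)"
proof -
  have Q: "norm_sq x \<noteq> 0" using norm_sq_pos[OF x] by simp
  have "pd k (sigma_grad l) x = - ((pd k c x * b l x + c x * pd k (b l) x) / norm_sq x)
      + c x * b l x * pd k norm_sq x / (norm_sq x)\<^sup>2"
    unfolding sigma_grad_def[abs_def] using Q
    by (simp add: pd_divide pd_mult pd_minus differentiable_mult differentiable_minus
        differentiable_c[OF x] differentiable_form[OF x] differentiable_norm_sq[OF x])
  also have "\<dots> = \<mu> * b k x * b l x / norm_sq x - (c x)\<^sup>2 * a l k x / norm_sq x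
      + (\<Sum>m\<in>UNIV. \<Gamma> m k l x * sigma_grad m x) + 2 * (c x)\<^sup>2 * b k x * b l x / (norm_sq x)\<^sup>2"
    using Q by (simp add: pd_c[OF x] pd_form[OF x] pd_norm_sq[OF x] sigma_grad_def
        sum_divide_distrib sum_distrib_left sum_negf power2_eq_square field_simps)
  also have "\<dots> = \<mu> * a k l x - \<mu> * b k x * b l x / norm_sq x
      + (\<Sum>m\<in>UNIV. \<Gamma> m k l x * sigma_grad m x)"
    using Q unfolding c_sq_norm_sq[OF x]
    by (simp add: metric_sym[OF x, of l] power2_eq_square field_simps)
  finally show ?thesis .
qed

sublocale conformal_change U a "\<lambda>y. (form_norm a b y)\<^sup>2" sigma_grad
proof
  fix y l assume y: "y \<in> U"
  show "(form_norm a b y)\<^sup>2 \<noteq> 0" using form_norm_pos[OF y] by simp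
  show "(\<lambda>y. (form_norm a b y)\<^sup>2) differentiable (at y)"
    using differentiable_norm_sq[OF y] by (rule differentiable_at_cong_open[OF _ open_domain y])
      (simp add: form_norm_sq)
  have "pd l (\<lambda>y. (form_norm a b y)\<^sup>2) y = pd l norm_sq y"
    by (rule pd_cong_open[OF open_domain y]) (simp add: form_norm_sq)
  thus "pd l (\<lambda>y. (form_norm a b y)\<^sup>2) y = - 2 * (form_norm a b y)\<^sup>2 * sigma_grad l y"
    using norm_sq_pos[OF y] by (simp add: pd_norm_sq[OF y] form_norm_sq[OF y] sigma_grad_def)
qed

lemma sigma_grad_norm_sq:
  assumes x: "x \<in> U"
  shows "(\<Sum>m\<in>UNIV. sigma_grad m x * raise x (\<lambda>p. sigma_grad p x) m) = - \<mu>"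
proof -
  define r where "r = c x / norm_sq x"
  have "(\<Sum>m\<in>UNIV. sigma_grad m x * raise x (\<lambda>p. sigma_grad p x) m)
      = r * r * (\<Sum>m\<in>UNIV. b m x * raise x (\<lambda>p. b p x) m)"
    unfolding raise_sigma_grad unfolding sigma_grad_eq r_def[symmetric]
    by (simp add: sum_distrib_left mult_ac)
  also have "\<dots> = c x * c x / norm_sq x"
    using norm_sq_pos[OF x] by (simp add: norm_sq_def[symmetric] r_def)
  also have "\<dots> = - \<mu>"
    using c_sq_norm_sq[OF x] norm_sq_pos[OF x] by (simp add: power2_eq_square)
  finally show ?thesis .
qed

text \<open>T is the covariant derivative of sigma_grad, see pd_sigma_grad.\<close>

lemma conformal_curvature_terms:
  assumes x: "x \<in> U"
  defines "T \<equiv> \<lambda>k l. \<mu> * a k l x - \<mu> * b k x * b l x / norm_sq x"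
    and "S \<equiv> conformal_shift x (\<lambda>p. sigma_grad p x)"
  shows "conformal_shift x (T k) i l j - conformal_shift x (T l) i k j
      + (\<Sum>m\<in>UNIV. S i k m * S m l j - S i l m * S m k j)
    = \<mu> * ((if i = l then a k j x else 0) - (if i = k then a l j x else 0))"
proof -
  let ?Q = "norm_sq x" and ?w = "raise x (\<lambda>p. b p x)" and ?s = "\<lambda>p. sigma_grad p x"
  have Q: "?Q \<noteq> 0" using norm_sq_pos[OF x] by simp
  have mu: "\<mu> = - (c x * c x) / ?Q"
    using c_sq_norm_sq[OF x] Q by (simp add: power2_eq_square field_simps)
  have raise_T: "raise x (T k) i = \<mu> * (if i = k then 1 else 0) - \<mu> * b k x * ?w i / ?Q" for k i
  proof -
    have "raise x (T k) i = \<mu> * (\<Sum>p\<in>UNIV. ainv i p x * a p k x) - \<mu> * b k x * ?w i / ?Q"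
      by (simp add: T_def raise_def metric_sym[OF x, of k] sum_subtractf sum_distrib_left
          sum_divide_distrib algebra_simps)
    thus ?thesis by (simp add: inv_metric_mult_metric[OF x])
  qed
  have "(\<Sum>m\<in>UNIV. S i k m * S m l j - S i l m * S m k j)
      = (\<Sum>m\<in>UNIV. S i k m * S m l j) - (\<Sum>m\<in>UNIV. S i l m * S m k j)"
    by (rule sum_subtractf)
  also have "\<dots> = ((if i = j then ?s k * ?s l else 0) + (if i = l then ?s k * ?s j else 0)
        + (if i = k then 2 * (?s j * ?s l) + a l j x * \<mu> else 0)
        - a k j x * ?s l * raise x ?s i - a k l x * ?s j * raise x ?s i)
      - ((if i = j then ?s l * ?s k else 0) + (if i = k then ?s l * ?s j else 0)
        + (if i = l then 2 * (?s j * ?s k) + a k j x * \<mu> else 0)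
        - a l j x * ?s k * raise x ?s i - a l k x * ?s j * raise x ?s i)"
    unfolding S_def sum_shift_tensor_mult[where A = "\<lambda>p q. a p q x", OF metric_raise[OF x]]
      sigma_grad_norm_sq[OF x]
    by simp
  finally have SS: "(\<Sum>m\<in>UNIV. S i k m * S m l j - S i l m * S m k j) = \<dots>" .
  show ?thesis
    unfolding SS shift_tensor_def raise_T raise_sigma_grad metric_sym[OF x, of l k]
    using Q
    by (cases "i = j"; cases "i = l"; cases "i = k")
      (simp_all add: T_def sigma_grad_def mu field_simps metric_sym[OF x])
qed

lemma riem_tensor_conformal_form:
  assumes x: "x \<in> U"
  shows "riem_tensor abar i j k l x = riem_tensor a i j k l x
    + \<mu> * ((if i = l then a k j x else 0) - (if i = k then a l j x else 0))"
  using riem_tensor_conformal[OF x differentiable_sigma_grad[OF x] pd_sigma_grad[OF x]]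
    conformal_curvature_terms[OF x, of k i l j]
  by (simp only: add.assoc)

lemma cov_deriv_conformal_form:
  assumes x: "x \<in> U"
  shows "cov_deriv abar (\<lambda>i y. b i y / (form_norm a b y)\<^sup>2) i j x = 0"
proof -
  let ?Q = "norm_sq x" and ?s = "\<lambda>p. sigma_grad p x"
  have Q: "?Q \<noteq> 0" using norm_sq_pos[OF x] by simp
  have "(\<Sum>k\<in>UNIV. conformal_shift x ?s k i j * b k x)
      = ?s i * b j x + ?s j * b i x - a i j x * (\<Sum>k\<in>UNIV. raise x ?s k * b k x)"
    by (simp add: shift_tensor_def sum.distrib sum_subtractf sum_distrib_left algebra_simps)
  also have "(\<Sum>k\<in>UNIV. raise x ?s k * b k x)
      = - (c x / ?Q) * (\<Sum>k\<in>UNIV. b k x * raise x (\<lambda>p. b p x) k)"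
    by (simp add: raise_sigma_grad sum_distrib_left mult_ac)
  finally have shift_b: "(\<Sum>k\<in>UNIV. conformal_shift x ?s k i j * b k x)
      = ?s i * b j x + ?s j * b i x + a i j x * c x"
    using Q by (simp add: norm_sq_def[symmetric])
  have "cov_deriv abar (\<lambda>i y. b i y / (form_norm a b y)\<^sup>2) i j x
      = (pd j (b i) x + 2 * b i x * ?s j
        - (\<Sum>k\<in>UNIV. \<Gamma> k i j x * b k x) - (\<Sum>k\<in>UNIV. conformal_shift x ?s k i j * b k x)) / ?Q"
    using Q
    by (simp add: cov_deriv_def pd_divide_factor[OF x differentiable_form[OF x]]
        christoffel_conformal[OF x] form_norm_sq[OF x] sum.distrib distrib_right
        sum_divide_distrib add_divide_distrib diff_divide_distrib)
  also have "\<dots> = 0"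
    unfolding shift_b pd_form[OF x] using christoffel_sym[OF x, of _ i j] metric_sym[OF x, of i j]
    by (simp add: sigma_grad_def algebra_simps)
  finally show ?thesis .
qed

lemma form_norm_conformal_form:
  assumes x: "x \<in> U"
  shows "form_norm abar (\<lambda>i y. b i y / (form_norm a b y)\<^sup>2) x = 1"
proof -
  have Q: "norm_sq x > 0" using norm_sq_pos[OF x] .
  have "(\<Sum>i\<in>UNIV. \<Sum>j\<in>UNIV. inv_metric abar i j x * (b i x / (form_norm a b x)\<^sup>2)
      * (b j x / (form_norm a b x)\<^sup>2))
      = (\<Sum>i\<in>UNIV. \<Sum>j\<in>UNIV. ainv i j x * b i x * b j x) / norm_sq x"
    unfolding inv_metric_conformal[OF x] form_norm_sq[OF x] using Q
    by (simp add: sum_divide_distrib power2_eq_square field_simps)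
  also have "\<dots> = 1" using Q by (simp add: norm_sq_eq[symmetric])
  finally show ?thesis by (simp add: form_norm_def)
qed


end

theorem lemma3p4:
  fixes U :: "(real^'n::finite) set"
    and a :: "'n \<Rightarrow> 'n \<Rightarrow> real^'n \<Rightarrow> real"
    and b :: "'n \<Rightarrow> real^'n \<Rightarrow> real"
    and c :: "real^'n \<Rightarrow> real"
    and \<mu> \<kappa> :: real
  assumes metric: "riem_metric U a"
    and smooth_b: "\<forall>i. smooth_on U (b i)"
    and nonzero: "\<forall>x\<in>U. form_norm a b x > 0"
    and curv: "\<forall>x\<in>U. \<forall>y. \<forall>i k. riem_curv a i k x y =
                 \<mu> * (alpha_sq a x y * (if i = k then 1 else 0) - y$i * lower a x y k)"
    and cov: "\<forall>x\<in>U. \<forall>i j. cov_deriv a b i j x = c x * a i j x"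
    and cc: "\<forall>x\<in>U. (c x)\<^sup>2 = \<kappa> - \<mu> * (form_norm a b x)\<^sup>2"
    and mu_neg: "\<mu> < 0"
    and kappa0: "\<kappa> = 0"
  defines "abar \<equiv> (\<lambda>i j x. a i j x / (form_norm a b x)\<^sup>2)"
    and "bbar \<equiv> (\<lambda>i x. b i x / (form_norm a b x)\<^sup>2)"
  shows "(\<forall>x\<in>U. \<forall>y. \<forall>i k. riem_curv abar i k x y = 0)
       \<and> (\<forall>x\<in>U. \<forall>i j. cov_deriv abar bbar i j x = 0)
       \<and> (\<forall>x\<in>U. form_norm abar bbar x = 1)"
proof -
  interpret concircular_form U a b c \<mu>
    by unfold_locales (use metric smooth_b nonzero cov cc mu_neg kappa0 in auto)
  have "riem_curv abar i k x y = 0" if "x \<in> U" for x y i k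
    using riem_curv_change[OF riem_tensor_conformal_form[OF that]] curv that
    by (simp add: abar_def)
  thus ?thesis
    using cov_deriv_conformal_form form_norm_conformal_form by (auto simp: abar_def bbar_def)
qed

end
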